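(* Let $\Gamma$ be an infinite connected subgraph of $\mathbb B$ with natural weights. There is a constant $c_1>0$ such that the following holds. Let $r\ge1$, $x_0\in\Gamma$, $B=B(x_0,r)$, $M=M(x_0,r)$, $V=V(x_0,r)$ and $V_1=V(x_0,r/(32M))$. Then for $x\in B(x_0,r/(32M))$ and $t>0$, $$P^x(\tau_B\le t)\le\Big(1-\frac{V_1}{64MV}\Big)+\frac{t}{2rV},$$ and $$q_{2t}(x,x)\ge\frac{c_1V_1^2}{V^3M^2}\quad\text{for } t\le\frac{rV_1}{64M}.$$
   Context: $\mathbb B$ is the rooted tree in which every vertex has $n_0\ge2$ children. On $\Gamma$: $\mu_{xy}=1$ for adjacent $x,y$ and $0$ otherwise, $\mu_x$ the degree of $x$ in $\Gamma$, $\mu(A)=\sum_{x\in A}\mu_x$, $d$ the graph distance in $\Gamma$, $B(x,r)=\{y\in\Gamma:d(x,y)\le r\}$, $V(x,r)=\mu(B(x,r))$. $Y$ is the continuous-time simple random walk on $\Gamma$ (exponential mean-1 holding times, jumps to a uniform neighbour) with law $P^x$, $q_t(x,y)=P^x(Y_t=y)/\mu_y$, and $\tau_B=\inf\{t\ge0:Y_t\notin B\}$. $M(x,r)$ is the smallest $m$ such that there is $A=\{z_1,\dots,z_m\}\subset\Gamma$ with $d(x,z_i)\in[r/4,3r/4]$ for all $i$ such that every path in $\Gamma$ from $x$ to $\Gamma\setminus B(x,r)$ passes through $A$. *)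

theory Defs
  imports Complex_Main
begin

text \<open>The rooted tree in which every vertex has n0 children: vertices are words
  over the alphabet {0..<n0}; the root is the empty word, the children of w are w @ [i].\<close>

definition tree_vert :: "nat \<Rightarrow> nat list set" where
  "tree_vert n0 = {w. \<forall>i\<in>set w. i < n0}"

definition tree_adj :: "nat \<Rightarrow> nat list \<Rightarrow> nat list \<Rightarrow> bool" where
  "tree_adj n0 u v \<longleftrightarrow> u \<in> tree_vert n0 \<and> v \<in> tree_vert n0 \<and>
     ((\<exists>i<n0. v = u @ [i]) \<or> (\<exists>i<n0. u = v @ [i]))"

definition adj :: "nat \<Rightarrow> nat list set \<Rightarrow> nat list \<Rightarrow> nat list \<Rightarrow> bool" where
  "adj n0 S u v \<longleftrightarrow> u \<in> S \<and> v \<in> S \<and> tree_adj n0 u v"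

definition nbrs :: "nat \<Rightarrow> nat list set \<Rightarrow> nat list \<Rightarrow> nat list set" where
  "nbrs n0 S x = {y. adj n0 S x y}"

definition deg :: "nat \<Rightarrow> nat list set \<Rightarrow> nat list \<Rightarrow> nat" where
  "deg n0 S x = card (nbrs n0 S x)"

definition mu :: "nat \<Rightarrow> nat list set \<Rightarrow> nat list set \<Rightarrow> real" where
  "mu n0 S A = (\<Sum>x\<in>A. real (deg n0 S x))"

definition is_walk :: "nat \<Rightarrow> nat list set \<Rightarrow> nat list list \<Rightarrow> bool" where
  "is_walk n0 S p \<longleftrightarrow> p \<noteq> [] \<and> set p \<subseteq> S \<and>
     (\<forall>i. Suc i < length p \<longrightarrow> adj n0 S (p ! i) (p ! Suc i))"

definition graph_connected :: "nat \<Rightarrow> nat list set \<Rightarrow> bool" where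
  "graph_connected n0 S \<longleftrightarrow>
     (\<forall>x\<in>S. \<forall>y\<in>S. \<exists>p. is_walk n0 S p \<and> hd p = x \<and> last p = y)"

definition gdist :: "nat \<Rightarrow> nat list set \<Rightarrow> nat list \<Rightarrow> nat list \<Rightarrow> nat" where
  "gdist n0 S x y = (LEAST n. \<exists>p. is_walk n0 S p \<and> hd p = x \<and> last p = y \<and> length p = Suc n)"

definition gball :: "nat \<Rightarrow> nat list set \<Rightarrow> nat list \<Rightarrow> real \<Rightarrow> nat list set" where
  "gball n0 S x r = {y\<in>S. real (gdist n0 S x y) \<le> r}"

definition vol :: "nat \<Rightarrow> nat list set \<Rightarrow> nat list \<Rightarrow> real \<Rightarrow> real" where
  "vol n0 S x r = mu n0 S (gball n0 S x r)"

definition Mprop :: "nat \<Rightarrow> nat list set \<Rightarrow> nat list \<Rightarrow> real \<Rightarrow> nat \<Rightarrow> bool" where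
  "Mprop n0 S x r m \<longleftrightarrow> (\<exists>A. finite A \<and> card A = m \<and> A \<subseteq> S \<and>
     (\<forall>z\<in>A. r / 4 \<le> real (gdist n0 S x z) \<and> real (gdist n0 S x z) \<le> 3 * r / 4) \<and>
     (\<forall>p. is_walk n0 S p \<and> hd p = x \<and> last p \<notin> gball n0 S x r \<longrightarrow> set p \<inter> A \<noteq> {}))"

definition Mnum :: "nat \<Rightarrow> nat list set \<Rightarrow> nat list \<Rightarrow> real \<Rightarrow> nat" where
  "Mnum n0 S x r = (LEAST m. Mprop n0 S x r m)"

fun pk :: "nat \<Rightarrow> nat list set \<Rightarrow> nat \<Rightarrow> nat list \<Rightarrow> nat list \<Rightarrow> real" where
  "pk n0 S 0 x y = (if x = y then 1 else 0)"
| "pk n0 S (Suc k) x y = (\<Sum>z\<in>nbrs n0 S x. pk n0 S k z y) / real (deg n0 S x)"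

fun exitk :: "nat \<Rightarrow> nat list set \<Rightarrow> nat list set \<Rightarrow> nat \<Rightarrow> nat list \<Rightarrow> real" where
  "exitk n0 S Bs 0 x = (if x \<notin> Bs then 1 else 0)"
| "exitk n0 S Bs (Suc k) x = (if x \<notin> Bs then 1 else
       (\<Sum>z\<in>nbrs n0 S x. exitk n0 S Bs k z) / real (deg n0 S x))"

text \<open>Continuous-time SRW with Exp(1) holding times: Y_t = X_(N_t), N_t ~ Poisson(t)
  independent of the jump chain X.  P^x(Y_t = y):\<close>
definition ctrw_prob :: "nat \<Rightarrow> nat list set \<Rightarrow> real \<Rightarrow> nat list \<Rightarrow> nat list \<Rightarrow> real" where
  "ctrw_prob n0 S t x y = (\<Sum>k. exp (- t) * t ^ k / fact k * pk n0 S k x y)"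

definition heat_kernel :: "nat \<Rightarrow> nat list set \<Rightarrow> real \<Rightarrow> nat list \<Rightarrow> nat list \<Rightarrow> real" where
  "heat_kernel n0 S t x y = ctrw_prob n0 S t x y / real (deg n0 S y)"

text \<open>P^x(tau_Bs \<le> t): the walk has left Bs by time t iff the jump chain leaves Bs
  within the first N_t jumps.\<close>
definition exit_prob :: "nat \<Rightarrow> nat list set \<Rightarrow> nat list set \<Rightarrow> real \<Rightarrow> nat list \<Rightarrow> real" where
  "exit_prob n0 S Bs t x = (\<Sum>k. exp (- t) * t ^ k / fact k * exitk n0 S Bs k x)"

end

theory Submission
  imports Defs "HOL-Library.Sublist" "HOL-Analysis.Convex"
begin

text \<open>With the Laplacian \<open>L f = \<mu> (f - P f)\<close>, the mean exit time \<open>E\<^sup>x \<tau>\<^sub>B\<close> solves \<open>L h = \<mu>\<close> on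
  \<open>B\<close>, \<open>h = 0\<close> off \<open>B\<close>, so it can be bounded by the maximum principle. On a tree the function
  \<open>y \<mapsto> d(p,y) + d(p,q) - d(q,y)\<close> has Laplacian \<open>2\<delta>\<^sub>q - 2\<delta>\<^sub>p\<close>, which provides explicit
  comparison functions. The potential of \<open>\<mu>|\<^sub>B\<close> for the walk killed just outside \<open>B\<close> gives
  \<open>E \<tau>\<^sub>B \<le> 3rV\<close> on \<open>B\<close>. Charging the small ball \<open>B(x0, r/32M)\<close> and balancing the charge on a
  separating set \<open>A\<close> gives a function that is nonpositive beyond \<open>A\<close>, hence
  \<open>E\<^sup>x \<tau>\<^sub>B \<ge> 3rV\<^sub>1/(16M)\<close> near \<open>x0\<close>.

  For the jump chain, \<open>E\<^sup>x \<tau>\<^sub>B \<le> k + (max\<^sub>B E \<tau>\<^sub>B) P\<^sup>x(\<tau>\<^sub>B > k)\<close>; averaging over the Poisson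
  number of jumps up to time \<open>t\<close> gives \<open>P\<^sup>x(\<tau>\<^sub>B > t) \<ge> (E\<^sup>x \<tau>\<^sub>B - t)/(3rV)\<close>, the first
  estimate. By reversibility, Chapman-Kolmogorov and Cauchy-Schwarz,
  \<open>q\<^sub>2\<^sub>t(x,x) \<ge> P\<^sup>x(Y\<^sub>t \<in> B)\<^sup>2/\<mu>(B) \<ge> P\<^sup>x(\<tau>\<^sub>B > t)\<^sup>2/V\<close>, which gives the second.\<close>

lemma sum_square_le_weighted:
  fixes a w :: "'a \<Rightarrow> real"
  assumes "\<forall>i\<in>I. 0 < w i"
  shows "(\<Sum>i\<in>I. a i)\<^sup>2 \<le> (\<Sum>i\<in>I. (a i)\<^sup>2 / w i) * (\<Sum>i\<in>I. w i)"
proof -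
  have "(\<Sum>i\<in>I. a i) = (\<Sum>i\<in>I. a i / sqrt (w i) * sqrt (w i))"
    and "(\<Sum>i\<in>I. (a i)\<^sup>2 / w i) = (\<Sum>i\<in>I. (a i / sqrt (w i))\<^sup>2)"
    and "(\<Sum>i\<in>I. w i) = (\<Sum>i\<in>I. (sqrt (w i))\<^sup>2)"
    using assms by (auto intro!: sum.cong simp: power_divide)
  then show ?thesis by (simp only:) (rule Cauchy_Schwarz_ineq_sum)
qed

definition poisson :: "real \<Rightarrow> nat \<Rightarrow> real" where
  "poisson t k = exp (- t) * t ^ k / fact k"

lemma poisson_nonneg: "0 \<le> t \<Longrightarrow> 0 \<le> poisson t k"
  unfolding poisson_def by simp

lemma poisson_sums: "poisson t sums 1"
proof -
  have "(\<lambda>n. t^n / fact n) sums exp t"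
    using exp_converges[of t] by (simp add: divide_inverse_commute)
  then have "(\<lambda>n. exp (- t) * (t^n / fact n)) sums (exp (- t) * exp t)" by (rule sums_mult)
  then show ?thesis unfolding poisson_def by (simp add: mult_exp_exp)
qed

lemma poisson_weighted_summable:
  assumes "0 \<le> t" "\<And>k. 0 \<le> f k" "\<And>k. f k \<le> 1"
  shows "summable (\<lambda>k. poisson t k * f k)"
proof (rule summable_comparison_test'[OF sums_summable[OF poisson_sums]])
  fix k :: nat
  show "norm (poisson t k * f k) \<le> poisson t k"
    using assms poisson_nonneg[of t k] by (simp add: mult_left_le)
qed

lemma poisson_mean: "(\<lambda>k. poisson t k * real k) sums t"
proof -
  have "poisson t (Suc k) * real (Suc k) = t * poisson t k" for k
    unfolding poisson_def by (simp add: field_simps del: of_nat_Suc)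
  then have "(\<lambda>k. poisson t (Suc k) * real (Suc k)) sums (t * 1)"
    using sums_mult[OF poisson_sums, of t] by simp
  then show ?thesis using sums_Suc_iff[of "\<lambda>k. poisson t k * real k" t] by simp
qed

lemma poisson_convolution: "poisson (2 * t) n = (\<Sum>i\<le>n. poisson t i * poisson t (n - i))"
proof -
  have "(t + t)^n /\<^sub>R fact n = (\<Sum>i\<le>n. (t^i /\<^sub>R fact i) * (t^(n-i) /\<^sub>R fact (n-i)))"
    by (rule exp_series_add_commuting) simp
  then have e: "(2*t)^n / fact n = (\<Sum>i\<le>n. (t^i / fact i) * (t^(n-i) / fact (n-i)))"
    unfolding mult_2 by (simp add: divide_inverse_commute)
  have "poisson (2 * t) n = exp (-t) * exp (-t) * ((2*t)^n / fact n)"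
    unfolding poisson_def by (simp add: mult_exp_exp)
  also have "\<dots> = (\<Sum>i\<le>n. exp (-t) * exp (-t) * ((t^i / fact i) * (t^(n-i) / fact (n-i))))"
    unfolding e by (rule sum_distrib_left)
  also have "\<dots> = (\<Sum>i\<le>n. poisson t i * poisson t (n - i))"
    unfolding poisson_def by (intro sum.cong refl) (simp add: field_simps)
  finally show ?thesis .
qed

section \<open>Walks and the Laplacian on subgraphs of the tree\<close>

locale tree_graph =
  fixes n0 :: nat and S :: "nat list set"
begin

abbreviation "adjacent u v \<equiv> adj n0 S u v"
abbreviation "walk p \<equiv> is_walk n0 S p"
abbreviation "d x y \<equiv> gdist n0 S x y"
abbreviation "N x \<equiv> nbrs n0 S x"
abbreviation "dg x \<equiv> deg n0 S x"

lemma adjacent_sym: "adjacent u v \<Longrightarrow> adjacent v u"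
  unfolding adj_def tree_adj_def by blast

lemma adjacent_in_S: "adjacent u v \<Longrightarrow> u \<in> S \<and> v \<in> S"
  unfolding adj_def by blast

lemma adjacent_cases: "adjacent u v \<Longrightarrow> (\<exists>i. v = u @ [i]) \<or> (\<exists>i. u = v @ [i])"
  unfolding adj_def tree_adj_def by blast

lemma adjacent_length: "adjacent u v \<Longrightarrow> length v = Suc (length u) \<or> length u = Suc (length v)"
  using adjacent_cases by fastforce

lemma nbrs_iff: "w \<in> N x \<longleftrightarrow> adjacent x w"
  unfolding nbrs_def by simp

lemma nbrs_sym: "w \<in> N y \<longleftrightarrow> y \<in> N w"
  using adjacent_sym nbrs_iff by blast

lemma nbrs_in_S: "w \<in> N x \<Longrightarrow> w \<in> S \<and> x \<in> S"
  using adjacent_in_S nbrs_iff by blast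

lemma nbrs_finite: "finite (N x)"
proof -
  have "N x \<subseteq> {butlast x} \<union> (\<lambda>i. x @ [i]) ` {..<n0}"
    unfolding nbrs_def adj_def tree_adj_def by auto
  then show ?thesis by (rule finite_subset) auto
qed

lemma walk_nonempty: "walk p \<Longrightarrow> p \<noteq> []"
  unfolding is_walk_def by blast

lemma walk_in_S: "walk p \<Longrightarrow> set p \<subseteq> S"
  unfolding is_walk_def by blast

lemma walk_adjacent: "walk p \<Longrightarrow> Suc i < length p \<Longrightarrow> adjacent (p!i) (p!Suc i)"
  unfolding is_walk_def by blast

lemma walk_singleton: "x \<in> S \<Longrightarrow> walk [x]"
  unfolding is_walk_def by auto

lemma walk_pair: "adjacent u v \<Longrightarrow> walk [u, v]"
  using adjacent_in_S unfolding is_walk_def by (auto simp: less_Suc_eq nth_Cons split: nat.splits)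

lemma walk_snoc:
  assumes "walk p" "adjacent (last p) y"
  shows "walk (p @ [y])"
proof -
  have ne: "p \<noteq> []" using assms walk_nonempty by blast
  have "set (p @ [y]) \<subseteq> S" using assms walk_in_S adjacent_in_S by auto
  moreover have "adjacent ((p@[y])!i) ((p@[y])!Suc i)" if "Suc i < length (p@[y])" for i
  proof (cases "Suc i < length p")
    case True
    then show ?thesis using assms(1) walk_adjacent by (simp add: nth_append)
  next
    case False
    then have "i = length p - 1" using that by simp
    then show ?thesis using assms(2) ne by (simp add: nth_append last_conv_nth)
  qed
  ultimately show ?thesis unfolding is_walk_def by simp
qed

lemma walk_rev:
  assumes "walk p"
  shows "walk (rev p)"
proof -
  have "adjacent ((rev p)!i) ((rev p)!Suc i)" if "Suc i < length (rev p)" for i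
  proof -
    have "adjacent (p!(length p - Suc (Suc i))) (p!Suc (length p - Suc (Suc i)))"
      using assms walk_adjacent that by simp
    moreover have "Suc (length p - Suc (Suc i)) = length p - Suc i" using that by simp
    ultimately show ?thesis using that by (simp add: rev_nth adjacent_sym)
  qed
  then show ?thesis using assms unfolding is_walk_def by auto
qed

lemma walk_take: "walk p \<Longrightarrow> 0 < k \<Longrightarrow> walk (take k p)"
  unfolding is_walk_def by (auto dest: in_set_takeD)

lemma walk_drop: "walk p \<Longrightarrow> k < length p \<Longrightarrow> walk (drop k p)"
  unfolding is_walk_def by (auto dest: in_set_dropD)

lemma last_append_tl: "p \<noteq> [] \<Longrightarrow> q \<noteq> [] \<Longrightarrow> last p = hd q \<Longrightarrow> last (p @ tl q) = last q"
  by (cases q) auto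

lemma walk_append:
  assumes "walk p" "walk q" "last p = hd q"
  shows "walk (p @ tl q)"
  using assms(2,3)
proof (induction q rule: rev_induct)
  case Nil
  then show ?case using walk_nonempty by blast
next
  case (snoc y q)
  show ?case
  proof (cases "q = []")
    case True
    then show ?thesis using snoc assms(1) by simp
  next
    case False
    have "walk q" using walk_take[OF snoc.prems(1), of "length q"] False by simp
    then have "walk (p @ tl q)" using snoc.IH snoc.prems False by simp
    moreover have "adjacent (last q) y"
      using walk_adjacent[OF snoc.prems(1), of "length q - 1"] False
      by (simp add: nth_append last_conv_nth)
    moreover have "last (p @ tl q) = last q"
      using last_append_tl[of p q] walk_nonempty[OF assms(1)] False snoc.prems by simp
    ultimately show ?thesis using walk_snoc[of "p @ tl q" y] False by simp
  qed
qed

lemma dist_le_walk: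
  assumes "walk p" "hd p = x" "last p = y"
  shows "d x y \<le> length p - 1"
proof -
  have "length p = Suc (length p - 1)" using walk_nonempty[OF assms(1)] by simp
  then show ?thesis unfolding gdist_def using assms by (intro Least_le) blast
qed

lemma dist_le_walk_index:
  assumes "walk p" "hd p = x" "last p = y" "i < length p"
  shows "d x (p!i) \<le> i" and "d (p!i) y \<le> length p - 1 - i"
proof -
  have "walk (take (Suc i) p)" using walk_take assms by blast
  moreover have "hd (take (Suc i) p) = x"
    using assms walk_nonempty[OF assms(1)] by (simp add: hd_conv_nth)
  moreover have "last (take (Suc i) p) = p!i"
    using assms by (subst last_conv_nth) (auto simp: min_def intro: arg_cong[where f="(!) p"])
  ultimately have "d x (p!i) \<le> length (take (Suc i) p) - 1"
    using dist_le_walk[of "take (Suc i) p"] by blast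
  then show "d x (p!i) \<le> i" using assms by simp
  have "walk (drop i p)" using walk_drop assms by blast
  moreover have "hd (drop i p) = p!i" using assms by (simp add: hd_drop_conv_nth)
  moreover have "last (drop i p) = y" using assms by simp
  ultimately show "d (p!i) y \<le> length p - 1 - i" using dist_le_walk[of "drop i p"] by simp
qed

lemma walk_parity:
  assumes "walk p" "i < length p"
  shows "even (i + length (p!0) + length (p!i))"
  using assms(2)
proof (induction i)
  case (Suc i)
  then have "adjacent (p!i) (p!Suc i)" using walk_adjacent assms(1) by simp
  then show ?case using Suc adjacent_length by fastforce
qed simp

lemma walk_length_le:
  assumes "walk p" "i < length p"
  shows "length (p!i) \<le> length (p!0) + i"
  using assms(2)
proof (induction i)
  case (Suc i)
  then have "adjacent (p!i) (p!Suc i)" using walk_adjacent assms(1) by simp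
  then show ?case using Suc adjacent_length by fastforce
qed simp

text \<open>In the word encoding, \<open>prefix c v\<close> says that \<open>v\<close> lies in the subtree rooted at \<open>c\<close>,
  and \<open>butlast c\<close> is the parent of \<open>c\<close>.\<close>

lemma walk_leaves_subtree:
  assumes "walk q" "c \<noteq> []" "prefix c (hd q)" "\<not> prefix c (last q)"
  shows "\<exists>i. Suc i < length q \<and> q!i = c \<and> q!Suc i = butlast c"
proof -
  have ne: "q \<noteq> []" using walk_nonempty assms by blast
  define P where "P j \<longleftrightarrow> j < length q \<and> \<not> prefix c (q!j)" for j
  have "P (length q - 1)" using assms ne unfolding P_def by (simp add: last_conv_nth)
  then have Pj: "P (LEAST j. P j)" by (rule LeastI)
  have "(LEAST j. P j) \<noteq> 0"
  proof
    assume "(LEAST j. P j) = 0"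
    then show False using Pj assms(3) ne unfolding P_def by (simp add: hd_conv_nth)
  qed
  then obtain i where ji: "(LEAST j. P j) = Suc i" by (cases "LEAST j. P j") auto
  have "\<not> P i" using not_less_Least[of i P] ji by simp
  then have pi: "prefix c (q!i)" using Pj ji unfolding P_def by simp
  have a: "adjacent (q!i) (q!Suc i)" using walk_adjacent assms(1) Pj ji unfolding P_def by simp
  have npj: "\<not> prefix c (q!Suc i)" using Pj ji unfolding P_def by simp
  show ?thesis
  proof (cases "\<exists>k. q!Suc i = q!i @ [k]")
    case True
    then show ?thesis using pi npj by (metis prefix_append prefix_order.order_trans)
  next
    case False
    then obtain k where k: "q!i = q!Suc i @ [k]" using adjacent_cases[OF a] by blast
    then have "c = q!Suc i @ [k]" using pi npj by (simp add: prefix_snoc)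
    then show ?thesis using k Pj ji unfolding P_def by auto
  qed
qed

text \<open>The combinatorial Laplacian with the sign making it a nonnegative operator:
  \<open>laplacian f y = deg y * (f y - P f y)\<close> for the transition operator \<open>P\<close>.\<close>

definition laplacian :: "(nat list \<Rightarrow> real) \<Rightarrow> nat list \<Rightarrow> real" where
  "laplacian f y = (\<Sum>w\<in>N y. f y - f w)"

lemma laplacian_expand: "laplacian f x = real (dg x) * f x - (\<Sum>w\<in>N x. f w)"
  unfolding laplacian_def deg_def by (simp add: sum_subtractf)

lemma laplacian_add: "laplacian (\<lambda>v. f v + g v) y = laplacian f y + laplacian g y"
  unfolding laplacian_def sum.distrib[symmetric] by (rule sum.cong) auto

lemma laplacian_diff: "laplacian (\<lambda>v. f v - g v) y = laplacian f y - laplacian g y"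
  unfolding laplacian_def sum_subtractf[symmetric] by (rule sum.cong) auto

lemma laplacian_cmult: "laplacian (\<lambda>v. c * f v) y = c * laplacian f y"
  unfolding laplacian_def by (simp add: sum_distrib_left algebra_simps)

lemma laplacian_divide: "laplacian (\<lambda>v. f v / c) y = laplacian f y / c"
  unfolding laplacian_def by (simp add: sum_divide_distrib diff_divide_distrib)

lemma laplacian_const: "laplacian (\<lambda>v. c) y = 0"
  unfolding laplacian_def by simp

lemma laplacian_sum: "laplacian (\<lambda>v. \<Sum>z\<in>Z. f z v) y = (\<Sum>z\<in>Z. laplacian (f z) y)"
  unfolding laplacian_def by (simp add: sum_subtractf[symmetric] sum.swap[of _ "N y"])

lemma ball_subset: "gball n0 S x0 r \<subseteq> S"
  unfolding gball_def by auto

abbreviation "tp k x y \<equiv> pk n0 S k x y"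

lemma pk_nonneg: "0 \<le> tp k x y"
  by (induction k arbitrary: x) (auto intro!: sum_nonneg divide_nonneg_nonneg)

lemma pk_le_1: "tp k x y \<le> 1"
proof (induction k arbitrary: x)
  case (Suc k)
  have "(\<Sum>z\<in>N x. tp k z y) \<le> real (dg x)"
    using Suc sum_mono[of "N x" "\<lambda>z. tp k z y" "\<lambda>_. 1"] by (simp add: deg_def)
  then show ?case by (cases "dg x = 0") (simp_all add: divide_le_eq_1)
qed simp

lemma pk_Suc_last: "tp (Suc k) x y = (\<Sum>w\<in>N y. tp k x w / real (dg w))"
proof (induction k arbitrary: x)
  case 0
  have "tp (Suc 0) x y = (if y \<in> N x then 1 else 0) / real (dg x)"
    using nbrs_finite by (simp add: sum.delta)
  also have "\<dots> = (\<Sum>w\<in>N y. (if x = w then 1 / real (dg x) else 0))"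
    using nbrs_finite nbrs_sym[of x y] by (simp add: sum.delta)
  also have "\<dots> = (\<Sum>w\<in>N y. (if x = w then 1 else 0) / real (dg w))"
    by (rule sum.cong) auto
  finally show ?case by simp
next
  case (Suc k)
  have "tp (Suc (Suc k)) x y = (\<Sum>z\<in>N x. \<Sum>w\<in>N y. tp k z w / real (dg w)) / real (dg x)"
    using Suc.IH by simp
  also have "\<dots> = (\<Sum>w\<in>N y. \<Sum>z\<in>N x. tp k z w / real (dg w)) / real (dg x)"
    by (subst sum.swap) (rule refl)
  also have "\<dots> = (\<Sum>w\<in>N y. ((\<Sum>z\<in>N x. tp k z w) / real (dg w)) / real (dg x))"
    by (simp add: sum_divide_distrib)
  also have "\<dots> = (\<Sum>w\<in>N y. (\<Sum>z\<in>N x. tp k z w) / real (dg x) / real (dg w))"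
    by (rule sum.cong) (simp_all add: divide_divide_eq_left mult.commute)
  finally show ?case by simp
qed

lemma pk_reversible: "real (dg x) * tp k x y = real (dg y) * tp k y x"
proof (induction k arbitrary: x y)
  case (Suc k)
  have "real (dg x) * tp (Suc k) x y = (\<Sum>z\<in>N x. tp k z y)"
    by (cases "dg x = 0") (simp_all add: deg_def nbrs_finite)
  also have "\<dots> = (\<Sum>z\<in>N x. real (dg y) * tp k y z / real (dg z))"
  proof (rule sum.cong[OF refl])
    fix z assume "z \<in> N x"
    then have "x \<in> N z" using nbrs_sym by blast
    then have "0 < dg z" unfolding deg_def using nbrs_finite card_gt_0_iff by blast
    then show "tp k z y = real (dg y) * tp k y z / real (dg z)"
      using Suc.IH[of z y] by (simp add: field_simps)
  qed
  also have "\<dots> = real (dg y) * tp (Suc k) y x"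
    by (subst pk_Suc_last) (simp add: sum_distrib_left del: pk.simps)
  finally show ?case .
qed simp

lemma pk_chapman_kolmogorov_le:
  "finite F \<Longrightarrow> (\<Sum>y\<in>F. tp i x y * tp j y z) \<le> tp (i + j) x z"
proof (induction i arbitrary: x)
  case 0
  have "(\<Sum>y\<in>F. tp 0 x y * tp j y z) = (\<Sum>y\<in>F. if x = y then tp j x z else 0)"
    by (rule sum.cong) auto
  then show ?case using 0 pk_nonneg by (simp add: sum.delta)
next
  case (Suc i)
  have "(\<Sum>y\<in>F. tp (Suc i) x y * tp j y z) = (\<Sum>w\<in>N x. \<Sum>y\<in>F. tp i w y * tp j y z) / real (dg x)"
    by (simp add: sum_divide_distrib[symmetric] sum_distrib_right) (rule disjI2, rule sum.swap)
  also have "\<dots> \<le> (\<Sum>w\<in>N x. tp (i + j) w z) / real (dg x)"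
    using Suc by (intro divide_right_mono sum_mono) auto
  finally show ?case by simp
qed

lemma ctrw_prob_eq: "ctrw_prob n0 S t x y = (\<Sum>k. poisson t k * tp k x y)"
  unfolding ctrw_prob_def poisson_def by simp

lemma ctrw_summable: "0 \<le> t \<Longrightarrow> summable (\<lambda>k. poisson t k * tp k x y)"
  by (intro poisson_weighted_summable pk_nonneg pk_le_1)

lemma ctrw_prob_reversible:
  assumes "0 \<le> t"
  shows "real (dg x) * ctrw_prob n0 S t x y = real (dg y) * ctrw_prob n0 S t y x"
proof -
  have "real (dg x) * ctrw_prob n0 S t x y = (\<Sum>k. real (dg x) * (poisson t k * tp k x y))"
    unfolding ctrw_prob_eq by (rule suminf_mult[symmetric, OF ctrw_summable[OF assms]])
  also have "\<dots> = (\<Sum>k. real (dg y) * (poisson t k * tp k y x))"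
    using pk_reversible by (simp add: algebra_simps)
  also have "\<dots> = real (dg y) * ctrw_prob n0 S t y x"
    unfolding ctrw_prob_eq by (rule suminf_mult[OF ctrw_summable[OF assms]])
  finally show ?thesis .
qed

lemma pk_poisson_convolution_le:
  assumes "finite F" "0 \<le> t"
  shows "(\<Sum>y\<in>F. \<Sum>i\<le>n. poisson t i * tp i x y * (poisson t (n - i) * tp (n - i) y x))
    \<le> poisson (2 * t) n * tp n x x"
proof -
  have "(\<Sum>y\<in>F. \<Sum>i\<le>n. poisson t i * tp i x y * (poisson t (n - i) * tp (n - i) y x))
      = (\<Sum>i\<le>n. poisson t i * poisson t (n - i) * (\<Sum>y\<in>F. tp i x y * tp (n - i) y x))"
    by (subst sum.swap) (simp add: sum_distrib_left algebra_simps)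
  also have "\<dots> \<le> (\<Sum>i\<le>n. poisson t i * poisson t (n - i) * tp n x x)"
  proof (rule sum_mono)
    fix i assume "i \<in> {..n}"
    then have "(\<Sum>y\<in>F. tp i x y * tp (n - i) y x) \<le> tp n x x"
      using pk_chapman_kolmogorov_le[OF assms(1), of i x "n - i" x] by simp
    then show "poisson t i * poisson t (n - i) * (\<Sum>y\<in>F. tp i x y * tp (n - i) y x)
        \<le> poisson t i * poisson t (n - i) * tp n x x"
      using poisson_nonneg[OF assms(2)] by (simp add: mult_left_mono)
  qed
  also have "\<dots> = poisson (2 * t) n * tp n x x"
    by (simp add: poisson_convolution sum_distrib_right)
  finally show ?thesis .
qed

text \<open>Termwise comparison of the Cauchy product of the Poisson series of the two factors with
  the Poisson series of \<open>ctrw_prob n0 S (2 * t) x x\<close>.\<close>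

lemma ctrw_prob_chapman_kolmogorov_le:
  assumes "finite F" "0 \<le> t"
  shows "(\<Sum>y\<in>F. ctrw_prob n0 S t x y * ctrw_prob n0 S t y x) \<le> ctrw_prob n0 S (2 * t) x x"
proof -
  define a where "a y k = poisson t k * tp k x y" for y k
  define b where "b y k = poisson t k * tp k y x" for y k
  have a: "summable (\<lambda>k. norm (a y k))" and b: "summable (\<lambda>k. norm (b y k))" for y
    unfolding a_def b_def using ctrw_summable[OF assms(2)] poisson_nonneg[OF assms(2)] pk_nonneg
    by simp_all
  have "(\<lambda>n. \<Sum>i\<le>n. a y i * b y (n - i)) sums (ctrw_prob n0 S t x y * ctrw_prob n0 S t y x)" for y
    using Cauchy_product_sums[OF a b] unfolding a_def b_def ctrw_prob_eq by simp
  then have lhs: "(\<lambda>n. \<Sum>y\<in>F. \<Sum>i\<le>n. a y i * b y (n - i))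
      sums (\<Sum>y\<in>F. ctrw_prob n0 S t x y * ctrw_prob n0 S t y x)"
    by (rule sums_sum)
  have rhs: "(\<lambda>n. poisson (2 * t) n * tp n x x) sums ctrw_prob n0 S (2 * t) x x"
    unfolding ctrw_prob_eq using ctrw_summable[of "2 * t"] assms by (simp add: summable_sums)
  have "(\<Sum>y\<in>F. \<Sum>i\<le>n. a y i * b y (n - i)) \<le> poisson (2 * t) n * tp n x x" for n
    unfolding a_def b_def using pk_poisson_convolution_le[OF assms] .
  then show ?thesis using sums_le[OF _ lhs rhs] by simp
qed

end

section \<open>Distances and Green functions\<close>

locale connected_tree_graph = tree_graph +
  assumes connected: "graph_connected n0 S"
begin

lemma geodesic_ex:
  assumes "x \<in> S" "y \<in> S"
  obtains p where "walk p" "hd p = x" "last p = y" "length p = Suc (d x y)"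
proof -
  obtain p where "walk p" "hd p = x" "last p = y"
    using connected assms unfolding graph_connected_def by blast
  then have "\<exists>n p. walk p \<and> hd p = x \<and> last p = y \<and> length p = Suc n"
    using walk_nonempty by (metis Suc_pred length_greater_0_conv)
  then have "\<exists>p. walk p \<and> hd p = x \<and> last p = y \<and> length p = Suc (d x y)"
    unfolding gdist_def by (rule LeastI_ex)
  then show ?thesis using that by blast
qed

lemma geodesic_ends:
  assumes "walk p" "hd p = x" "last p = y" "length p = Suc (d x y)"
  shows "p!0 = x" "p!d x y = y"
  using assms walk_nonempty[OF assms(1)] by (simp_all add: hd_conv_nth last_conv_nth)

lemma dist_self: "x \<in> S \<Longrightarrow> d x x = 0"
  using dist_le_walk[OF walk_singleton] by fastforce

lemma dist_eq_0: "x \<in> S \<Longrightarrow> y \<in> S \<Longrightarrow> d x y = 0 \<Longrightarrow> x = y"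
  by (metis geodesic_ex geodesic_ends)

lemma dist_sym:
  assumes "x \<in> S" "y \<in> S"
  shows "d x y = d y x"
proof -
  have "d y x \<le> d x y" if xy: "x \<in> S" "y \<in> S" for x y
  proof -
    obtain p where p: "walk p" "hd p = x" "last p = y" "length p = Suc (d x y)"
      using geodesic_ex xy by blast
    have "d y x \<le> length (rev p) - 1"
      using dist_le_walk[OF walk_rev[OF p(1)]] p walk_nonempty[OF p(1)]
      by (simp add: hd_rev last_rev)
    then show ?thesis using p by simp
  qed
  then show ?thesis using assms by (meson antisym)
qed

lemma dist_triangle:
  assumes "x \<in> S" "y \<in> S" "z \<in> S"
  shows "d x z \<le> d x y + d y z"
proof -
  obtain p where p: "walk p" "hd p = x" "last p = y" "length p = Suc (d x y)"
    using geodesic_ex assms by blast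
  obtain q where q: "walk q" "hd q = y" "last q = z" "length q = Suc (d y z)"
    using geodesic_ex assms by blast
  have "walk (p @ tl q)" using walk_append p q by simp
  moreover have "hd (p @ tl q) = x" "last (p @ tl q) = z"
    using p q walk_nonempty[OF p(1)] walk_nonempty[OF q(1)] last_append_tl[of p q] by auto
  ultimately have "d x z \<le> length (p @ tl q) - 1" using dist_le_walk by blast
  then show ?thesis using p q by simp
qed

lemma dist_adjacent_le:
  assumes "adjacent y w" "x \<in> S"
  shows "d x w \<le> d x y + 1"
proof -
  have "d y w \<le> 1" using dist_le_walk[OF walk_pair[OF assms(1)]] by simp
  then show ?thesis using dist_triangle[of x y w] adjacent_in_S[OF assms(1)] assms(2) by simp
qed

lemma dist_parity:
  assumes "x \<in> S" "y \<in> S"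
  shows "even (d x y + length x + length y)"
proof -
  obtain p where p: "walk p" "hd p = x" "last p = y" "length p = Suc (d x y)"
    using geodesic_ex assms by blast
  show ?thesis using walk_parity[OF p(1), of "d x y"] geodesic_ends[OF p] p by simp
qed

lemma dist_adjacent:
  assumes "adjacent y w" "p \<in> S"
  shows "d p w = d p y + 1 \<or> d p y = d p w + 1"
proof -
  have "y \<in> S" "w \<in> S" using adjacent_in_S assms by auto
  then have "even (d p w + length p + length w)" "even (d p y + length p + length y)"
    using dist_parity assms by auto
  moreover have "d p w \<le> d p y + 1" "d p y \<le> d p w + 1"
    using dist_adjacent_le adjacent_sym assms by blast+
  moreover have "length w = Suc (length y) \<or> length y = Suc (length w)"
    using adjacent_length assms by blast
  ultimately show ?thesis by auto presburger+
qed

lemma length_le_dist: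
  assumes "x \<in> S" "y \<in> S"
  shows "length y \<le> length x + d x y"
proof -
  obtain p where p: "walk p" "hd p = x" "last p = y" "length p = Suc (d x y)"
    using geodesic_ex assms by blast
  show ?thesis using walk_length_le[OF p(1), of "d x y"] geodesic_ends[OF p] p by simp
qed

lemma closer_neighbour_ex:
  assumes "p \<in> S" "y \<in> S" "y \<noteq> p"
  obtains w where "w \<in> N y" "d p w + 1 = d p y"
proof -
  obtain q where q: "walk q" "hd q = p" "last q = y" "length q = Suc (d p y)"
    using geodesic_ex assms by blast
  obtain k where k: "d p y = Suc k" using dist_eq_0 assms by (cases "d p y") auto
  have a: "adjacent (q!k) y" using walk_adjacent q k geodesic_ends[OF q] by fastforce
  have "d p (q!k) \<le> k" using dist_le_walk_index(1)[OF q(1-3), of k] q k by simp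
  then have "d p (q!k) + 1 = d p y"
    using dist_adjacent[OF adjacent_sym[OF a] assms(1)] k by auto
  moreover have "q!k \<in> N y" using a adjacent_sym nbrs_iff by blast
  ultimately show ?thesis using that by blast
qed

lemma closer_child_prefix:
  assumes "p \<in> S" "adjacent y (y @ [i])" "d p (y @ [i]) + 1 = d p y"
  shows "prefix (y @ [i]) p"
proof (rule ccontr)
  assume np: "\<not> prefix (y @ [i]) p"
  have S: "y @ [i] \<in> S" "y \<in> S" using adjacent_in_S assms by auto
  obtain q where q: "walk q" "hd q = y @ [i]" "last q = p" "length q = Suc (d (y @ [i]) p)"
    using geodesic_ex S assms by blast
  obtain j where j: "Suc j < length q" "q!Suc j = y"
    using walk_leaves_subtree[OF q(1), of "y @ [i]"] q np by auto
  have "d y p < d (y @ [i]) p"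
    using dist_le_walk_index(2)[OF q(1-3), of "Suc j"] j q by simp
  then show False using dist_sym assms S by simp
qed

text \<open>If a child of \<open>y\<close> is closer to \<open>p\<close>, then \<open>p\<close> lies in the subtree of \<open>y\<close>, and every walk
  from \<open>p\<close> to the parent \<open>w\<close> of \<open>y\<close> passes through \<open>y\<close>.\<close>

lemma closer_parent_no_closer_child:
  assumes "p \<in> S" "adjacent y (y @ [i])" "d p (y @ [i]) + 1 = d p y"
    and "y = w @ [j]" "d p w + 1 = d p y" "w \<in> S"
  shows False
proof -
  have "prefix y p"
    using closer_child_prefix[OF assms(1-3)] prefix_order.order_trans prefix_append by blast
  obtain q where q: "walk q" "hd q = p" "last q = w" "length q = Suc (d p w)"
    using geodesic_ex[OF assms(1,6)] by blast
  have "\<not> prefix y w" using assms(4) by (simp add: prefix_def)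
  then obtain k where k: "Suc k < length q" "q!k = y"
    using walk_leaves_subtree[OF q(1), of y] q \<open>prefix y p\<close> assms(4) by auto
  have "d p y \<le> k" using dist_le_walk_index(1)[OF q(1-3), of k] k by simp
  then show False using k q assms(5) by simp
qed

lemma closer_neighbour_unique:
  assumes "p \<in> S" "w1 \<in> N y" "w2 \<in> N y" "d p w1 + 1 = d p y" "d p w2 + 1 = d p y"
  shows "w1 = w2"
proof -
  have a1: "adjacent y w1" and a2: "adjacent y w2" using assms nbrs_iff by auto
  consider (children) i j where "w1 = y @ [i]" "w2 = y @ [j]"
    | (parent) i where "y = w1 @ [i]" | (parent') j where "y = w2 @ [j]"
    using adjacent_cases[OF a1] adjacent_cases[OF a2] by blast
  then show ?thesis
  proof cases
    case children
    then have "prefix w1 p" "prefix w2 p" using closer_child_prefix assms a1 a2 by auto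
    then show ?thesis using children prefix_same_cases by fastforce
  next
    case parent
    then show ?thesis
      using closer_parent_no_closer_child[OF assms(1), of y _ w1 i] adjacent_cases[OF a2]
        a1 a2 assms adjacent_in_S by fastforce
  next
    case parent'
    then show ?thesis
      using closer_parent_no_closer_child[OF assms(1), of y _ w2 j] adjacent_cases[OF a1]
        a1 a2 assms adjacent_in_S by fastforce
  qed
qed

lemma geodesic_dist:
  assumes "walk q" "hd q = x" "last q = y" "length q = Suc (d x y)" "i < length q"
  shows "d x (q!i) = i" "d (q!i) y = d x y - i"
proof -
  have "x \<in> S" "y \<in> S" "q!i \<in> S"
    using walk_in_S[OF assms(1)] assms walk_nonempty[OF assms(1)] by auto
  then have "d x y \<le> d x (q!i) + d (q!i) y" using dist_triangle by blast
  then show "d x (q!i) = i" "d (q!i) y = d x y - i"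
    using dist_le_walk_index[OF assms(1-3,5)] assms(4,5) by auto
qed

lemma laplacian_dist:
  assumes "p \<in> S" "y \<in> S"
  shows "laplacian (\<lambda>v. real (d p v)) y = (if y = p then - real (dg y) else 2 - real (dg y))"
proof (cases "y = p")
  case True
  have "d p w = 1" if "w \<in> N y" for w
    using that dist_adjacent[of y w p] dist_self True assms nbrs_iff by auto
  then have "laplacian (\<lambda>v. real (d p v)) y = (\<Sum>w\<in>N y. -1)"
    unfolding laplacian_def using dist_self True assms by (intro sum.cong) auto
  then show ?thesis using True by (simp add: deg_def)
next
  case False
  obtain w0 where w0: "w0 \<in> N y" "d p w0 + 1 = d p y"
    using closer_neighbour_ex assms False by blast
  have farther: "d p w = d p y + 1" if "w \<in> N y - {w0}" for w
    using dist_adjacent[of y w p] closer_neighbour_unique[of p w0 y w] w0 that assms nbrs_iff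
    by auto
  have "laplacian (\<lambda>v. real (d p v)) y
      = (real (d p y) - real (d p w0)) + (\<Sum>w\<in>N y - {w0}. real (d p y) - real (d p w))"
    unfolding laplacian_def using nbrs_finite w0 by (simp add: sum.remove)
  also have "\<dots> = 1 - real (card (N y - {w0}))"
    using w0 farther by (simp add: algebra_simps)
  also have "\<dots> = 2 - real (dg y)"
    using nbrs_finite w0 card_gt_0_iff[of "N y"]
    by (auto simp: deg_def card_Diff_singleton of_nat_diff)
  finally show ?thesis using False by simp
qed

text \<open>\<open>green p q y\<close> is twice the Gromov product \<open>(y|q)\<^sub>p\<close>; as a function of \<open>y\<close> it vanishes
  at \<open>p\<close> and has Laplacian \<open>2\<close> at \<open>q\<close> and \<open>0\<close> elsewhere off \<open>p\<close>, so it is twice the Green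
  function with pole \<open>q\<close> of the walk killed at \<open>p\<close>.\<close>

definition green :: "nat list \<Rightarrow> nat list \<Rightarrow> nat list \<Rightarrow> real" where
  "green p q y = real (d p y) + real (d p q) - real (d q y)"

lemma laplacian_green:
  assumes "p \<in> S" "q \<in> S" "y \<in> S"
  shows "laplacian (green p q) y = (if y = q then 2 else 0) - (if y = p then 2 else 0)"
proof -
  have "laplacian (green p q) y = laplacian (\<lambda>v. real (d p v)) y - laplacian (\<lambda>v. real (d q v)) y"
    unfolding green_def by (simp add: laplacian_add laplacian_diff laplacian_const)
  then show ?thesis using laplacian_dist[OF assms(1,3)] laplacian_dist[OF assms(2,3)] by simp
qed

lemma green_nonneg: "p \<in> S \<Longrightarrow> q \<in> S \<Longrightarrow> y \<in> S \<Longrightarrow> 0 \<le> green p q y"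
  unfolding green_def using dist_triangle[of q p y] dist_sym[of q p] by simp

lemma green_le_pole: "p \<in> S \<Longrightarrow> q \<in> S \<Longrightarrow> y \<in> S \<Longrightarrow> green p q y \<le> 2 * real (d p q)"
  unfolding green_def using dist_triangle[of p q y] by simp

lemma green_le_dist: "p \<in> S \<Longrightarrow> q \<in> S \<Longrightarrow> y \<in> S \<Longrightarrow> green p q y \<le> 2 * real (d p y)"
  unfolding green_def using dist_triangle[of p y q] dist_sym[of q y] by simp

lemma green_geodesic:
  assumes "walk q" "hd q = p" "last q = y" "length q = Suc (d p y)" "i < length q"
  shows "green p (q!i) y = 2 * real (d p (q!i))"
  unfolding green_def using geodesic_dist[OF assms] assms(4,5) by simp

definition green_sum :: "(nat list \<Rightarrow> real) \<Rightarrow> nat list \<Rightarrow> nat list set \<Rightarrow> nat list \<Rightarrow> real" where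
  "green_sum c p Z y = (\<Sum>z\<in>Z. c z * green p z y)"

lemma laplacian_green_sum:
  assumes "p \<in> S" "finite Z" "Z \<subseteq> S" "y \<in> S"
  shows "laplacian (green_sum c p Z) y
    = (if y \<in> Z then 2 * c y else 0) - (if y = p then 2 * sum c Z else 0)"
proof -
  have "laplacian (green_sum c p Z) y
      = (\<Sum>z\<in>Z. (if y = z then 2 * c y else 0)) - (\<Sum>z\<in>Z. if y = p then 2 * c z else 0)"
    unfolding green_sum_def laplacian_sum laplacian_cmult sum_subtractf[symmetric]
    using laplacian_green assms by (intro sum.cong) auto
  then show ?thesis using assms(2) by (simp add: sum_distrib_left)
qed

lemma green_sum_nonneg:
  assumes "p \<in> S" "Z \<subseteq> S" "y \<in> S" "\<forall>z\<in>Z. 0 \<le> c z"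
  shows "0 \<le> green_sum c p Z y"
  unfolding green_sum_def using assms green_nonneg by (auto intro!: sum_nonneg)

lemma green_sum_le_pole:
  assumes "p \<in> S" "Z \<subseteq> S" "y \<in> S" "\<forall>z\<in>Z. 0 \<le> c z" "\<forall>z\<in>Z. real (d p z) \<le> D"
  shows "green_sum c p Z y \<le> 2 * D * sum c Z"
  unfolding green_sum_def sum_distrib_left
proof (rule sum_mono)
  fix z assume "z \<in> Z"
  then have "green p z y \<le> 2 * D" using assms green_le_pole[of p z y] by fastforce
  then show "c z * green p z y \<le> 2 * D * c z"
    using assms \<open>z \<in> Z\<close> by (simp add: mult_left_mono mult.commute)
qed

lemma green_sum_le_dist:
  assumes "p \<in> S" "Z \<subseteq> S" "y \<in> S" "\<forall>z\<in>Z. 0 \<le> c z"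
  shows "green_sum c p Z y \<le> 2 * real (d p y) * sum c Z"
  unfolding green_sum_def sum_distrib_left
proof (rule sum_mono)
  fix z assume "z \<in> Z"
  then have "green p z y \<le> 2 * real (d p y)" using assms green_le_dist[of p z y] by fastforce
  then show "c z * green p z y \<le> 2 * real (d p y) * c z"
    using assms \<open>z \<in> Z\<close> by (simp add: mult_left_mono mult.commute)
qed

definition separates :: "nat list \<Rightarrow> real \<Rightarrow> nat list set \<Rightarrow> bool" where
  "separates x0 r A \<longleftrightarrow> (\<forall>p. walk p \<and> hd p = x0 \<and> last p \<notin> gball n0 S x0 r \<longrightarrow> set p \<inter> A \<noteq> {})"

lemma Mnum_separating_set:
  assumes "\<exists>m. Mprop n0 S x0 r m"
  obtains A where "finite A" "A \<subseteq> S" "card A = Mnum n0 S x0 r"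
    "\<forall>a\<in>A. r / 4 \<le> real (d x0 a)" "separates x0 r A"
proof -
  have "Mprop n0 S x0 r (Mnum n0 S x0 r)" unfolding Mnum_def using assms by (rule LeastI_ex)
  then show ?thesis using that unfolding Mprop_def separates_def by blast
qed

text \<open>A geodesic from \<open>x0\<close> to a point outside the ball passes through a point \<open>a\<close> of \<open>A\<close>,
  where \<open>green x0 a\<close> equals \<open>2 d(x0,a) \<ge> r/2\<close>.\<close>

lemma green_sum_separating_ge:
  assumes "x0 \<in> S" "y \<in> S - gball n0 S x0 r" "separates x0 r A"
    and "finite A" "A \<subseteq> S" "\<forall>a\<in>A. r / 4 \<le> real (d x0 a)"
  shows "r / 2 \<le> green_sum (\<lambda>_. 1) x0 A y"
proof -
  obtain q where q: "walk q" "hd q = x0" "last q = y" "length q = Suc (d x0 y)"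
    using geodesic_ex assms(1,2) by blast
  have "set q \<inter> A \<noteq> {}" using assms(2,3) q unfolding separates_def by blast
  then obtain i where i: "i < length q" "q!i \<in> A" by (auto simp: in_set_conv_nth)
  have "r / 2 \<le> green x0 (q!i) y"
    using green_geodesic[OF q i(1)] assms(6) i(2) by fastforce
  also have "\<dots> \<le> (\<Sum>a\<in>A. green x0 a y)"
    using assms green_nonneg i(2) by (intro member_le_sum) auto
  also have "\<dots> = green_sum (\<lambda>_. 1) x0 A y"
    unfolding green_sum_def by simp
  finally show ?thesis .
qed

end

section \<open>Balls, volumes and the heat kernel\<close>

locale infinite_tree_graph = connected_tree_graph +
  assumes vertices: "S \<subseteq> tree_vert n0" and infinite_vertices: "infinite S"
begin

lemma deg_pos:
  assumes "x \<in> S"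
  shows "0 < dg x"
proof -
  obtain y where "y \<in> S" "y \<noteq> x"
    using infinite_vertices assms by (metis finite.simps insertCI subsetI finite_subset)
  then obtain w where "w \<in> N x" using closer_neighbour_ex[of y x] assms by blast
  then show ?thesis unfolding deg_def using nbrs_finite card_gt_0_iff by blast
qed

lemma ball_finite:
  assumes "x \<in> S"
  shows "finite (gball n0 S x r)"
proof -
  have "gball n0 S x r \<subseteq> {w. set w \<subseteq> {..<n0} \<and> length w \<le> length x + nat \<lceil>r\<rceil>}"
  proof
    fix y assume "y \<in> gball n0 S x r"
    then have y: "y \<in> S" "real (d x y) \<le> r" unfolding gball_def by auto
    then have "d x y \<le> nat \<lceil>r\<rceil>" by linarith
    then show "y \<in> {w. set w \<subseteq> {..<n0} \<and> length w \<le> length x + nat \<lceil>r\<rceil>}"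
      using length_le_dist[OF assms y(1)] vertices y unfolding tree_vert_def by auto
  qed
  then show ?thesis by (rule finite_subset) (simp add: finite_lists_length_le)
qed

lemma outside_ball_ex:
  assumes "x0 \<in> S"
  obtains y where "y \<in> S" "y \<notin> gball n0 S x0 r"
  using ball_finite[OF assms, of r] infinite_vertices that by (metis subsetI finite_subset)

lemma outside_ball_near:
  assumes "x0 \<in> S" "0 \<le> r"
  obtains w where "w \<in> S - gball n0 S x0 r" "real (d x0 w) \<le> r + 1"
proof -
  obtain y where y: "y \<in> S" "y \<notin> gball n0 S x0 r" using outside_ball_ex assms by blast
  obtain q where q: "walk q" "hd q = x0" "last q = y" "length q = Suc (d x0 y)"
    using geodesic_ex assms y by blast
  define i where "i = Suc (nat \<lfloor>r\<rfloor>)"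
  have "r < real (d x0 y)" using y unfolding gball_def by auto
  then have "i < length q" unfolding i_def using q(4) assms(2) by linarith
  then have "d x0 (q!i) = i" "q!i \<in> S" using geodesic_dist[OF q] walk_in_S[OF q(1)] by auto
  moreover have "r < real i" "real i \<le> r + 1" unfolding i_def using assms(2) by linarith+
  ultimately show ?thesis using that[of "q!i"] unfolding gball_def by auto
qed

lemma separating_set_nonempty:
  assumes "x0 \<in> S" "separates x0 r A"
  shows "A \<noteq> {}"
proof -
  obtain y where "y \<in> S" "y \<notin> gball n0 S x0 r" using outside_ball_ex assms by blast
  moreover obtain q where "walk q" "hd q = x0" "last q = y"
    using geodesic_ex assms \<open>y \<in> S\<close> by blast
  ultimately show ?thesis using assms(2) unfolding separates_def by blast
qed

lemma vol_pos:
  assumes "x0 \<in> S" "0 \<le> r"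
  shows "0 < vol n0 S x0 r"
  unfolding vol_def mu_def
  using ball_finite deg_pos assms dist_self by (intro sum_pos2[of _ x0]) (auto simp: gball_def)

text \<open>Reversibility turns \<open>q\<^sub>2\<^sub>t(x,x)\<close> into \<open>\<Sum>\<^sub>y P\<^sub>t(x,y)\<^sup>2/\<mu>\<^sub>y\<close>, and Cauchy-Schwarz bounds that
  from below.\<close>

lemma heat_kernel_diag_ge:
  assumes "x \<in> S" "finite B" "B \<subseteq> S" "0 \<le> t"
  shows "(\<Sum>y\<in>B. ctrw_prob n0 S t x y)\<^sup>2 / mu n0 S B \<le> heat_kernel n0 S (2 * t) x x"
proof -
  let ?P = "\<lambda>y. ctrw_prob n0 S t x y"
  have dg_pos: "\<forall>y\<in>B. 0 < real (dg y)" using deg_pos assms(3) by auto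
  have "(\<Sum>y\<in>B. ?P y)\<^sup>2 / mu n0 S B \<le> (\<Sum>y\<in>B. (?P y)\<^sup>2 / real (dg y))"
  proof (cases "B = {}")
    case False
    then have "0 < mu n0 S B" unfolding mu_def using assms(2) dg_pos by (simp add: sum_pos)
    then show ?thesis
      using sum_square_le_weighted[OF dg_pos, of ?P] by (simp add: mu_def divide_le_eq)
  qed (simp add: mu_def)
  also have "\<dots> = (\<Sum>y\<in>B. ?P y * ctrw_prob n0 S t y x) / real (dg x)"
    unfolding sum_divide_distrib
    using ctrw_prob_reversible[OF assms(4), of x] dg_pos deg_pos[OF assms(1)]
    by (intro sum.cong) (auto simp: field_simps power2_eq_square)
  also have "\<dots> \<le> heat_kernel n0 S (2 * t) x x"
    unfolding heat_kernel_def
    using ctrw_prob_chapman_kolmogorov_le[OF assms(2,4)] by (simp add: divide_right_mono)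
  finally show ?thesis .
qed

text \<open>Test function for the lower bound on the exit time: charge density \<open>\<mu>\<close> on the small ball
  \<open>B(x0,\<rho>)\<close>, balanced at \<open>x0\<close> by negative charges on \<open>A\<close>. The Green sum over \<open>A\<close> is at least
  \<open>r/2\<close> beyond a separating set \<open>A\<close>, and the constant \<open>7\<rho>\<mu>(B(x0,\<rho>))\<close> is what makes the
  function nonpositive there when \<open>\<rho> = r/(32|A|)\<close>.\<close>

definition balanced_potential :: "nat list \<Rightarrow> real \<Rightarrow> nat list set \<Rightarrow> nat list \<Rightarrow> real" where
  "balanced_potential x0 \<rho> A y = 7 * \<rho> * vol n0 S x0 \<rho>
     + green_sum (\<lambda>z. real (dg z)) x0 (gball n0 S x0 \<rho>) y / 2
     - vol n0 S x0 \<rho> / (2 * real (card A)) * green_sum (\<lambda>_. 1) x0 A y"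

lemma laplacian_balanced_potential_le:
  assumes "x0 \<in> S" "finite A" "A \<subseteq> S" "A \<noteq> {}" "y \<in> S"
  shows "laplacian (balanced_potential x0 \<rho> A) y \<le> real (dg y)"
proof -
  let ?Z = "gball n0 S x0 \<rho>" and ?M = "real (card A)" and ?V = "vol n0 S x0 \<rho>"
  have M: "0 < ?M" using assms(2,4) by (simp add: card_gt_0_iff)
  have V: "0 \<le> ?V" unfolding vol_def mu_def by (simp add: sum_nonneg)
  have "laplacian (balanced_potential x0 \<rho> A) y
    = laplacian (green_sum (\<lambda>z. real (dg z)) x0 ?Z) y / 2
      - ?V / (2 * ?M) * laplacian (green_sum (\<lambda>_. 1) x0 A) y"
    unfolding balanced_potential_def
    by (simp only: laplacian_diff laplacian_add laplacian_const laplacian_divide laplacian_cmult)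
  also have "\<dots> = (if y \<in> ?Z then real (dg y) else 0) - (if y \<in> A then ?V / ?M else 0)"
    unfolding laplacian_green_sum[OF assms(1) ball_finite[OF assms(1)] ball_subset assms(5)]
      laplacian_green_sum[OF assms(1-3,5)]
    using M by (auto simp: vol_def mu_def field_simps)
  also have "\<dots> \<le> real (dg y)" using M V by (auto intro: order_trans[of _ 0])
  finally show ?thesis .
qed

lemma balanced_potential_nonpos:
  assumes "x0 \<in> S" "finite A" "A \<subseteq> S" "A \<noteq> {}"
    and far: "\<forall>a\<in>A. r / 4 \<le> real (d x0 a)" and sep: "separates x0 r A"
    and \<rho>: "32 * real (card A) * \<rho> \<le> r" and y: "y \<in> S - gball n0 S x0 r"
  shows "balanced_potential x0 \<rho> A y \<le> 0"
proof -
  let ?M = "real (card A)" and ?V = "vol n0 S x0 \<rho>"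
  have M: "0 < ?M" using assms(2,4) by (simp add: card_gt_0_iff)
  have V: "0 \<le> ?V" unfolding vol_def mu_def by (simp add: sum_nonneg)
  have "\<forall>z\<in>gball n0 S x0 \<rho>. real (d x0 z) \<le> \<rho>" unfolding gball_def by blast
  then have "green_sum (\<lambda>z. real (dg z)) x0 (gball n0 S x0 \<rho>) y \<le> 2 * \<rho> * ?V"
    using green_sum_le_pole[of x0 "gball n0 S x0 \<rho>" y "\<lambda>z. real (dg z)" \<rho>] assms(1) ball_subset y
    unfolding vol_def mu_def by auto
  moreover have "r / 2 \<le> green_sum (\<lambda>_. 1) x0 A y"
    using green_sum_separating_ge[OF assms(1) y sep assms(2,3) far] .
  then have "16 * ?M * \<rho> \<le> green_sum (\<lambda>_. 1) x0 A y" using \<rho> by linarith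
  then have "?V / (2 * ?M) * (16 * ?M * \<rho>) \<le> ?V / (2 * ?M) * green_sum (\<lambda>_. 1) x0 A y"
    using M V by (intro mult_left_mono) auto
  moreover have "?V / (2 * ?M) * (16 * ?M * \<rho>) = 8 * \<rho> * ?V" using M by simp
  ultimately show ?thesis unfolding balanced_potential_def by linarith
qed

lemma balanced_potential_center_ge:
  assumes "x0 \<in> S" "finite A" "A \<subseteq> S" "A \<noteq> {}" and x: "x \<in> gball n0 S x0 \<rho>"
  shows "6 * \<rho> * vol n0 S x0 \<rho> \<le> balanced_potential x0 \<rho> A x"
proof -
  let ?M = "real (card A)" and ?V = "vol n0 S x0 \<rho>"
  have M: "0 < ?M" using assms(2,4) by (simp add: card_gt_0_iff)
  have V: "0 \<le> ?V" unfolding vol_def mu_def by (simp add: sum_nonneg)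
  have "x \<in> S" using x ball_subset by blast
  have "green_sum (\<lambda>_. 1) x0 A x \<le> 2 * real (d x0 x) * ?M"
    using green_sum_le_dist[of x0 A x "\<lambda>_. 1"] assms(1,3) \<open>x \<in> S\<close> by simp
  also have "\<dots> \<le> 2 * \<rho> * ?M"
    using x M unfolding gball_def by (intro mult_right_mono) auto
  finally have "?V / (2 * ?M) * green_sum (\<lambda>_. 1) x0 A x \<le> ?V / (2 * ?M) * (2 * \<rho> * ?M)"
    using M V by (intro mult_left_mono) auto
  moreover have "?V / (2 * ?M) * (2 * \<rho> * ?M) = \<rho> * ?V" using M by simp
  moreover have "0 \<le> green_sum (\<lambda>z. real (dg z)) x0 (gball n0 S x0 \<rho>) x"
    using green_sum_nonneg ball_subset assms(1) \<open>x \<in> S\<close> by simp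
  ultimately show ?thesis unfolding balanced_potential_def by linarith
qed

end

section \<open>Exit times of the killed walk\<close>

locale killed_walk = infinite_tree_graph +
  fixes B :: "nat list set"
  assumes finite_B: "finite B" and B_subset: "B \<subseteq> S"
begin

definition survival :: "nat \<Rightarrow> nat list \<Rightarrow> real" where
  "survival k x = 1 - exitk n0 S B k x"

lemma survival_0: "survival 0 x = (if x \<in> B then 1 else 0)"
  unfolding survival_def by simp

lemma survival_Suc:
  "survival (Suc k) x = (if x \<in> B then (\<Sum>w\<in>N x. survival k w) / real (dg x) else 0)"
proof (cases "x \<in> B")
  case True
  then have "0 < real (dg x)" using deg_pos B_subset by auto
  then show ?thesis
    using True unfolding survival_def by (simp add: sum_subtractf deg_def field_simps)
qed (simp add: survival_def)

lemma survival_outside: "x \<notin> B \<Longrightarrow> survival k x = 0"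
  by (cases k) (simp_all add: survival_0 survival_Suc)

lemma survival_bounds: "0 \<le> survival k x \<and> survival k x \<le> 1"
proof (induction k arbitrary: x)
  case (Suc k)
  show ?case
  proof (cases "x \<in> B")
    case True
    then have "0 < real (dg x)" using deg_pos B_subset by auto
    moreover have "(\<Sum>w\<in>N x. survival k w) \<le> real (dg x)"
      using Suc sum_mono[of "N x" "survival k" "\<lambda>_. 1"] by (simp add: deg_def)
    moreover have "0 \<le> (\<Sum>w\<in>N x. survival k w)" using Suc by (intro sum_nonneg) auto
    ultimately show ?thesis using True by (simp add: survival_Suc)
  qed (simp add: survival_Suc)
qed (simp add: survival_0)

lemma survival_nonneg: "0 \<le> survival k x"
  using survival_bounds by blast

lemma survival_le_1: "survival k x \<le> 1"
  using survival_bounds by blast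

lemma survival_partial_sum_le:
  assumes F_nonneg: "\<forall>y\<in>S. 0 \<le> F y" and F_super: "\<forall>y\<in>B. real (dg y) \<le> laplacian F y"
    and "x \<in> S"
  shows "(\<Sum>k<n. survival k x) \<le> F x"
  using assms(3)
proof (induction n arbitrary: x)
  case (Suc n)
  show ?case
  proof (cases "x \<in> B")
    case True
    then have dg: "0 < real (dg x)" using deg_pos B_subset by auto
    have "(\<Sum>k<Suc n. survival k x) = 1 + (\<Sum>k<n. (\<Sum>w\<in>N x. survival k w) / real (dg x))"
      using True by (simp add: sum.lessThan_Suc_shift survival_0 survival_Suc del: sum.lessThan_Suc)
    also have "\<dots> = 1 + (\<Sum>w\<in>N x. (\<Sum>k<n. survival k w)) / real (dg x)"
      by (simp add: sum_divide_distrib[symmetric]) (rule disjI2, rule sum.swap)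
    also have "\<dots> \<le> 1 + (\<Sum>w\<in>N x. F w) / real (dg x)"
      using Suc.IH nbrs_in_S dg by (simp add: divide_right_mono sum_mono)
    also have "\<dots> \<le> F x"
      using F_super True dg unfolding laplacian_expand by (simp add: field_simps)
    finally show ?thesis .
  qed (use F_nonneg Suc.prems in \<open>simp add: survival_outside\<close>)
qed (use F_nonneg in simp)

text \<open>For \<open>w\<close> outside \<open>B\<close>: the potential of the charge density \<open>\<mu>\<close> on \<open>B\<close> for the walk killed
  at \<open>w\<close>. It dominates the exit time from \<open>B\<close>.\<close>

definition exit_potential :: "nat list \<Rightarrow> nat list \<Rightarrow> real" where
  "exit_potential w y = green_sum (\<lambda>z. real (dg z)) w B y / 2"

lemma exit_potential_nonneg: "w \<in> S \<Longrightarrow> y \<in> S \<Longrightarrow> 0 \<le> exit_potential w y"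
  unfolding exit_potential_def using green_sum_nonneg B_subset by simp

lemma laplacian_exit_potential:
  assumes "w \<in> S - B" "y \<in> B"
  shows "laplacian (exit_potential w) y = real (dg y)"
proof -
  have "laplacian (exit_potential w) y = laplacian (green_sum (\<lambda>z. real (dg z)) w B) y / 2"
    unfolding exit_potential_def using laplacian_cmult[of "1/2"] by simp
  moreover have "y \<in> S" "y \<noteq> w" using assms B_subset by auto
  ultimately show ?thesis
    using laplacian_green_sum[of w B y "\<lambda>z. real (dg z)"] assms finite_B B_subset by simp
qed

lemma survival_summable: "summable (\<lambda>k. survival k x)"
proof (cases "x \<in> S")
  case True
  have "infinite (S - B)" using infinite_vertices finite_B by (rule Diff_infinite_finite[rotated])
  then obtain w where w: "w \<in> S - B" by (metis ex_in_conv finite.emptyI)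
  then have "(\<Sum>k<n. survival k x) \<le> exit_potential w x" for n
    using survival_partial_sum_le exit_potential_nonneg laplacian_exit_potential True by simp
  then show ?thesis using survival_nonneg by (intro summableI_nonneg_bounded)
next
  case False
  then have "x \<notin> B" using B_subset by auto
  then show ?thesis by (simp add: survival_outside)
qed

text \<open>The mean number of jumps before the walk leaves \<open>B\<close>; since holding times have mean 1,
  this is also the mean exit time \<open>E\<^sup>x \<tau>\<^sub>B\<close> of the continuous-time walk.\<close>

definition exit_time :: "nat list \<Rightarrow> real" where
  "exit_time x = (\<Sum>k. survival k x)"

lemma exit_time_outside: "x \<notin> B \<Longrightarrow> exit_time x = 0"
  unfolding exit_time_def by (simp add: survival_outside)

lemma exit_time_nonneg: "0 \<le> exit_time x"
  unfolding exit_time_def using survival_summable survival_nonneg by (simp add: suminf_nonneg)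

lemma exit_time_le_supersolution:
  assumes "\<forall>y\<in>S. 0 \<le> F y" "\<forall>y\<in>B. real (dg y) \<le> laplacian F y" "x \<in> S"
  shows "exit_time x \<le> F x"
  unfolding exit_time_def
  using survival_summable survival_partial_sum_le[OF assms] by (rule suminf_le_const)

lemma exit_time_eq:
  assumes "x \<in> B"
  shows "exit_time x = 1 + (\<Sum>w\<in>N x. exit_time w) / real (dg x)"
proof -
  have "exit_time x = survival 0 x + (\<Sum>k. survival (Suc k) x)"
    unfolding exit_time_def using suminf_split_head[OF survival_summable] by simp
  also have "(\<Sum>k. survival (Suc k) x) = (\<Sum>k. (\<Sum>w\<in>N x. survival k w) / real (dg x))"
    using assms by (simp add: survival_Suc)
  also have "\<dots> = (\<Sum>w\<in>N x. exit_time w) / real (dg x)"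
    unfolding exit_time_def
    by (simp add: suminf_divide summable_sum survival_summable suminf_sum)
  finally show ?thesis using assms by (simp add: survival_0)
qed

text \<open>Markov property at time \<open>k\<close>: from wherever the walk is then, it needs at most \<open>H\<close> more
  jumps on average.\<close>

lemma survival_tail_le:
  assumes "\<forall>y\<in>B. exit_time y \<le> H"
  shows "(\<Sum>j. survival (j + k) x) \<le> H * survival k x"
proof (induction k arbitrary: x)
  case 0
  then show ?case
    using assms by (cases "x \<in> B") (simp_all add: exit_time_def survival_0 survival_outside)
next
  case (Suc k)
  show ?case
  proof (cases "x \<in> B")
    case True
    then have dg: "0 < real (dg x)" using deg_pos B_subset by auto
    have sm: "summable (\<lambda>j. survival (j + k) w)" for w
      by (subst summable_iff_shift) (rule survival_summable)
    have "(\<Sum>j. survival (j + Suc k) x) = (\<Sum>j. (\<Sum>w\<in>N x. survival (j + k) w) / real (dg x))"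
      using True by (simp add: survival_Suc)
    also have "\<dots> = (\<Sum>j. \<Sum>w\<in>N x. survival (j + k) w) / real (dg x)"
      by (rule suminf_divide) (intro summable_sum sm)
    also have "(\<Sum>j. \<Sum>w\<in>N x. survival (j + k) w) = (\<Sum>w\<in>N x. \<Sum>j. survival (j + k) w)"
      by (rule suminf_sum) (rule sm)
    also have "(\<Sum>w\<in>N x. \<Sum>j. survival (j + k) w) / real (dg x)
        \<le> (\<Sum>w\<in>N x. H * survival k w) / real (dg x)"
      using Suc.IH dg by (simp add: divide_right_mono sum_mono)
    also have "\<dots> = H * survival (Suc k) x"
      using True by (simp add: survival_Suc sum_distrib_left)
    finally show ?thesis .
  qed (simp add: survival_outside)
qed

lemma exit_time_le_steps:
  assumes "\<forall>y\<in>B. exit_time y \<le> H"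
  shows "exit_time x \<le> real k + H * survival k x"
proof -
  have "exit_time x = (\<Sum>j. survival (j + k) x) + (\<Sum>j<k. survival j x)"
    unfolding exit_time_def using survival_summable by (rule suminf_split_initial_segment)
  moreover have "(\<Sum>j<k. survival j x) \<le> real k"
    using sum_mono[of "{..<k}" "\<lambda>j. survival j x" "\<lambda>_. 1"] survival_le_1 by simp
  ultimately show ?thesis using survival_tail_le[OF assms, of k x] by simp
qed

lemma subsolution_excess_le:
  assumes g_out: "\<forall>y\<in>S - B. g y \<le> 0" and g_sub: "\<forall>y\<in>B. laplacian g y \<le> real (dg y)"
    and g_le: "\<forall>y\<in>B. g y \<le> C" and "y \<in> S"
  shows "g y - exit_time y \<le> C * survival k y"
  using assms(4)
proof (induction k arbitrary: y)
  case 0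
  then show ?case
    using g_out g_le exit_time_nonneg[of y]
    by (cases "y \<in> B") (auto simp: survival_0 exit_time_outside)
next
  case (Suc k)
  show ?case
  proof (cases "y \<in> B")
    case True
    then have dg: "0 < real (dg y)" using deg_pos B_subset by auto
    have "g y \<le> 1 + (\<Sum>w\<in>N y. g w) / real (dg y)"
      using g_sub True dg unfolding laplacian_expand by (simp add: field_simps)
    then have "g y - exit_time y \<le> (\<Sum>w\<in>N y. g w - exit_time w) / real (dg y)"
      using exit_time_eq[OF True] by (simp add: sum_subtractf diff_divide_distrib)
    also have "\<dots> \<le> (\<Sum>w\<in>N y. C * survival k w) / real (dg y)"
      using Suc.IH nbrs_in_S dg by (simp add: divide_right_mono sum_mono)
    also have "\<dots> = C * survival (Suc k) y"
      using True by (simp add: survival_Suc sum_distrib_left)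
    finally show ?thesis .
  qed (use g_out Suc.prems in \<open>simp add: survival_Suc exit_time_outside\<close>)
qed

text \<open>Maximum principle: the excess \<open>g - exit_time\<close> is bounded by a multiple of the survival
  probability, which tends to zero.\<close>

lemma exit_time_ge_subsolution:
  assumes "\<forall>y\<in>S - B. g y \<le> 0" "\<forall>y\<in>B. laplacian g y \<le> real (dg y)" "x \<in> S"
  shows "g x \<le> exit_time x"
proof -
  define C where "C = (\<Sum>y\<in>B. \<bar>g y\<bar>)"
  have "\<forall>y\<in>B. g y \<le> C"
    unfolding C_def using finite_B member_le_sum[of _ B "\<lambda>y. \<bar>g y\<bar>"] by fastforce
  then have "g x - exit_time x \<le> C * survival k x" for k
    using subsolution_excess_le assms by blast
  moreover have "(\<lambda>k. C * survival k x) \<longlonglongrightarrow> 0"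
    using summable_LIMSEQ_zero[OF survival_summable] by (rule tendsto_mult_right_zero)
  ultimately have "g x - exit_time x \<le> 0" by (intro LIMSEQ_le_const[of _ 0]) auto
  then show ?thesis by simp
qed

definition survival_prob :: "real \<Rightarrow> nat list \<Rightarrow> real" where
  "survival_prob t x = (\<Sum>k. poisson t k * survival k x)"

lemma survival_prob_summable: "0 \<le> t \<Longrightarrow> summable (\<lambda>k. poisson t k * survival k x)"
  by (intro poisson_weighted_summable survival_nonneg survival_le_1)

lemma survival_prob_nonneg: "0 \<le> t \<Longrightarrow> 0 \<le> survival_prob t x"
  unfolding survival_prob_def using survival_prob_summable poisson_nonneg survival_nonneg
  by (intro suminf_nonneg) auto

lemma exit_prob_eq:
  assumes "0 \<le> t"
  shows "exit_prob n0 S B t x = 1 - survival_prob t x"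
proof -
  have "exit_prob n0 S B t x = (\<Sum>k. poisson t k - poisson t k * survival k x)"
    unfolding exit_prob_def
    by (rule arg_cong[where f=suminf], rule ext) (simp add: poisson_def survival_def field_simps)
  also have "\<dots> = 1 - survival_prob t x"
    unfolding survival_prob_def
    using suminf_diff[OF sums_summable[OF poisson_sums] survival_prob_summable[OF assms]]
      poisson_sums by (simp add: sums_iff)
  finally show ?thesis .
qed

text \<open>Average \<open>exit_time x \<le> k + H survival k x\<close> over \<open>k \<sim> Poisson(t)\<close>.\<close>

lemma survival_prob_ge:
  assumes "0 \<le> t" "0 < H" "\<forall>y\<in>B. exit_time y \<le> H"
  shows "(exit_time x - t) / H \<le> survival_prob t x"
proof -
  have lhs: "(\<lambda>k. (poisson t k * exit_time x - poisson t k * real k) / H)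
      sums ((1 * exit_time x - t) / H)"
    by (intro sums_divide sums_diff sums_mult2 poisson_sums poisson_mean)
  have rhs: "(\<lambda>k. poisson t k * survival k x) sums survival_prob t x"
    unfolding survival_prob_def using survival_prob_summable[OF assms(1)] by (rule summable_sums)
  have "(poisson t k * exit_time x - poisson t k * real k) / H \<le> poisson t k * survival k x" for k
  proof -
    have "(exit_time x - real k) / H \<le> survival k x"
      using exit_time_le_steps[OF assms(3), of x k] assms(2) by (simp add: field_simps)
    then have "poisson t k * ((exit_time x - real k) / H) \<le> poisson t k * survival k x"
      using poisson_nonneg[OF assms(1)] by (rule mult_left_mono)
    then show ?thesis by (simp add: algebra_simps diff_divide_distrib)
  qed
  then show ?thesis using sums_le[OF _ lhs rhs] by simp
qed

lemma survival_le_pk: "survival k x \<le> (\<Sum>y\<in>B. tp k x y)"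
proof (induction k arbitrary: x)
  case 0
  then show ?case using finite_B by (simp add: survival_0 sum.delta)
next
  case (Suc k)
  show ?case
  proof (cases "x \<in> B")
    case True
    have "survival (Suc k) x \<le> (\<Sum>w\<in>N x. \<Sum>y\<in>B. tp k w y) / real (dg x)"
      using True Suc by (simp add: survival_Suc divide_right_mono sum_mono)
    also have "\<dots> = (\<Sum>y\<in>B. tp (Suc k) x y)"
      by (simp add: sum_divide_distrib[symmetric]) (rule disjI2, rule sum.swap)
    finally show ?thesis .
  qed (simp add: survival_outside pk_nonneg sum_nonneg)
qed

lemma survival_prob_le_ctrw_prob:
  assumes "0 \<le> t"
  shows "survival_prob t x \<le> (\<Sum>y\<in>B. ctrw_prob n0 S t x y)"
proof -
  have "(\<Sum>y\<in>B. ctrw_prob n0 S t x y) = (\<Sum>k. \<Sum>y\<in>B. poisson t k * tp k x y)"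
    unfolding ctrw_prob_eq by (rule suminf_sum[symmetric]) (rule ctrw_summable[OF assms])
  moreover have "summable (\<lambda>k. \<Sum>y\<in>B. poisson t k * tp k x y)"
    by (intro summable_sum ctrw_summable[OF assms])
  moreover have "poisson t k * survival k x \<le> (\<Sum>y\<in>B. poisson t k * tp k x y)" for k
    using survival_le_pk[of k x] poisson_nonneg[OF assms]
    by (simp add: sum_distrib_left[symmetric] mult_left_mono)
  ultimately show ?thesis
    unfolding survival_prob_def using survival_prob_summable[OF assms] by (simp add: suminf_le)
qed

lemma heat_kernel_ge_survival_prob:
  assumes "x \<in> S" "0 \<le> t"
  shows "(survival_prob t x)\<^sup>2 / mu n0 S B \<le> heat_kernel n0 S (2 * t) x x"
proof -
  have "(survival_prob t x)\<^sup>2 \<le> (\<Sum>y\<in>B. ctrw_prob n0 S t x y)\<^sup>2"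
    using survival_prob_le_ctrw_prob survival_prob_nonneg assms(2) by (intro power_mono) auto
  moreover have "0 \<le> mu n0 S B" unfolding mu_def by (simp add: sum_nonneg)
  ultimately show ?thesis
    using heat_kernel_diag_ge[OF assms(1) finite_B B_subset assms(2)]
    by (meson divide_right_mono order_trans)
qed

lemma exit_time_le_mu:
  assumes "w \<in> S - B" "\<forall>z\<in>B. real (d w z) \<le> D" "y \<in> S"
  shows "exit_time y \<le> D * mu n0 S B"
proof -
  have "exit_time y \<le> exit_potential w y"
    using exit_time_le_supersolution exit_potential_nonneg laplacian_exit_potential assms by simp
  also have "\<dots> \<le> D * mu n0 S B"
    unfolding exit_potential_def mu_def
    using green_sum_le_pole[of w B y "\<lambda>z. real (dg z)" D] assms B_subset by simp
  finally show ?thesis .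
qed

lemma exit_time_ball_le:
  assumes "B = gball n0 S x0 r" "x0 \<in> S" "0 \<le> r" "y \<in> S"
  shows "exit_time y \<le> (2 * r + 1) * vol n0 S x0 r"
proof -
  obtain w where w: "w \<in> S - B" "real (d x0 w) \<le> r + 1"
    using outside_ball_near assms by blast
  have "real (d w z) \<le> 2 * r + 1" if "z \<in> B" for z
    using dist_triangle[of w x0 z] dist_sym[of x0 w] that w assms unfolding gball_def by auto
  then show ?thesis using exit_time_le_mu[OF w(1) _ assms(4)] assms(1) unfolding vol_def by simp
qed

lemma exit_time_ball_ge:
  assumes B: "B = gball n0 S x0 r" and "x0 \<in> S" "finite A" "A \<subseteq> S" "A \<noteq> {}"
    and "\<forall>a\<in>A. r / 4 \<le> real (d x0 a)" "separates x0 r A"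
    and x: "x \<in> gball n0 S x0 (r / (32 * real (card A)))"
  shows "3 * r * vol n0 S x0 (r / (32 * real (card A))) / (16 * real (card A)) \<le> exit_time x"
proof -
  let ?\<rho> = "r / (32 * real (card A))"
  have M: "0 < real (card A)" using assms(3,5) by (simp add: card_gt_0_iff)
  have "x \<in> S" using x ball_subset by blast
  have "32 * real (card A) * ?\<rho> \<le> r" using M by simp
  then have "\<forall>y\<in>S - B. balanced_potential x0 ?\<rho> A y \<le> 0"
    using balanced_potential_nonpos[OF assms(2-7)] B by blast
  moreover have "\<forall>y\<in>B. laplacian (balanced_potential x0 ?\<rho> A) y \<le> real (dg y)"
    using laplacian_balanced_potential_le[OF assms(2-5)] B_subset by blast
  ultimately have "balanced_potential x0 ?\<rho> A x \<le> exit_time x"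
    using exit_time_ge_subsolution \<open>x \<in> S\<close> by blast
  moreover have "3 * r * vol n0 S x0 ?\<rho> / (16 * real (card A)) = 6 * ?\<rho> * vol n0 S x0 ?\<rho>"
    using M by (simp add: field_simps)
  ultimately show ?thesis using balanced_potential_center_ge[OF assms(2-5) x] by linarith
qed

lemma ball_survival_prob_ge:
  assumes B: "B = gball n0 S x0 r" and r: "1 \<le> r" and x0: "x0 \<in> S"
    and A: "finite A" "A \<subseteq> S" "A \<noteq> {}" "\<forall>a\<in>A. r / 4 \<le> real (d x0 a)" "separates x0 r A"
    and x: "x \<in> gball n0 S x0 (r / (32 * real (card A)))" and t: "0 \<le> t"
  defines "M \<equiv> real (card A)" and "V \<equiv> vol n0 S x0 r"
    and "V1 \<equiv> vol n0 S x0 (r / (32 * real (card A)))"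
  shows "V1 / (64 * M * V) - t / (2 * r * V) \<le> survival_prob t x"
proof -
  have V: "0 < V" unfolding V_def using vol_pos x0 r by simp
  have M: "0 < M" unfolding M_def using A by (simp add: card_gt_0_iff)
  have V1: "0 \<le> V1" unfolding V1_def vol_def mu_def by (simp add: sum_nonneg)
  have "exit_time y \<le> 3 * (r * V)" if "y \<in> B" for y
  proof -
    have "exit_time y \<le> (2 * r + 1) * V"
      using exit_time_ball_le[OF B x0] that B_subset r unfolding V_def by auto
    also have "\<dots> \<le> 3 * (r * V)" using r V by (simp add: algebra_simps)
    finally show ?thesis .
  qed
  then have s: "(exit_time x - t) / (3 * (r * V)) \<le> survival_prob t x"
    using survival_prob_ge t r V by simp
  have "V1 / (64 * M * V) \<le> V1 / (16 * M * V)"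
    using V1 M V by (intro divide_left_mono) auto
  moreover have "t / (3 * r * V) \<le> t / (2 * r * V)"
    using t r V by (intro divide_left_mono) auto
  ultimately have "V1 / (64 * M * V) - t / (2 * r * V) \<le> V1 / (16 * M * V) - t / (3 * r * V)"
    by linarith
  also have "\<dots> = (3 * r * V1 / (16 * M) - t) / (3 * (r * V))"
    using r M V by (simp add: field_simps)
  also have "\<dots> \<le> (exit_time x - t) / (3 * (r * V))"
    using exit_time_ball_ge[OF B x0 A(1-5) x] r V unfolding M_def V1_def
    by (simp add: divide_right_mono)
  finally show ?thesis using s by linarith
qed

lemma ball_estimates:
  assumes B: "B = gball n0 S x0 r" and r: "1 \<le> r" and x0: "x0 \<in> S"
    and A: "finite A" "A \<subseteq> S" "A \<noteq> {}" "\<forall>a\<in>A. r / 4 \<le> real (d x0 a)" "separates x0 r A"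
    and x: "x \<in> gball n0 S x0 (r / (32 * real (card A)))" and t: "0 < t"
  defines "M \<equiv> real (card A)" and "V \<equiv> vol n0 S x0 r"
    and "V1 \<equiv> vol n0 S x0 (r / (32 * real (card A)))"
  shows "exit_prob n0 S B t x \<le> (1 - V1 / (64 * M * V)) + t / (2 * r * V)"
    and "t \<le> r * V1 / (64 * M) \<Longrightarrow>
      1 / 16384 * V1 ^ 2 / (V ^ 3 * M ^ 2) \<le> heat_kernel n0 S (2 * t) x x"
proof -
  have s: "V1 / (64 * M * V) - t / (2 * r * V) \<le> survival_prob t x"
    using ball_survival_prob_ge[OF B r x0 A] x t unfolding M_def V_def V1_def by simp
  then show "exit_prob n0 S B t x \<le> (1 - V1 / (64 * M * V)) + t / (2 * r * V)"
    using exit_prob_eq t by simp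
  assume "t \<le> r * V1 / (64 * M)"
  have V: "0 < V" unfolding V_def using vol_pos x0 r by simp
  have M: "0 < M" unfolding M_def using A by (simp add: card_gt_0_iff)
  have V1: "0 \<le> V1" unfolding V1_def vol_def mu_def by (simp add: sum_nonneg)
  have "t / (2 * r * V) \<le> r * V1 / (64 * M) / (2 * r * V)"
    using \<open>t \<le> r * V1 / (64 * M)\<close> r V by (intro divide_right_mono) auto
  also have "\<dots> = V1 / (128 * M * V)" using r M V by (simp add: field_simps)
  finally have "V1 / (128 * M * V) \<le> survival_prob t x" using s by simp
  then have "(V1 / (128 * M * V))\<^sup>2 / V \<le> (survival_prob t x)\<^sup>2 / V"
    using V1 M V by (intro divide_right_mono power_mono) auto
  also have "\<dots> \<le> heat_kernel n0 S (2 * t) x x"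
    using heat_kernel_ge_survival_prob[of x t] x t B unfolding V_def vol_def gball_def by simp
  finally show "1 / 16384 * V1 ^ 2 / (V ^ 3 * M ^ 2) \<le> heat_kernel n0 S (2 * t) x x"
    using V M by (simp add: field_simps power2_eq_square power3_eq_cube)
qed

end

theorem proposition4p6:
  fixes n0 :: nat and S :: "nat list set"
  assumes "n0 \<ge> 2" and "S \<subseteq> tree_vert n0" and "infinite S" and "graph_connected n0 S"
  shows "\<exists>c1>0. \<forall>(r::real) x0 x (t::real).
     r \<ge> 1 \<longrightarrow> x0 \<in> S \<longrightarrow> (\<exists>m. Mprop n0 S x0 r m) \<longrightarrow>
     (let M = real (Mnum n0 S x0 r); B = gball n0 S x0 r; V = vol n0 S x0 r;
          V1 = vol n0 S x0 (r / (32 * M))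
      in x \<in> gball n0 S x0 (r / (32 * M)) \<longrightarrow> t > 0 \<longrightarrow>
         exit_prob n0 S B t x \<le> (1 - V1 / (64 * M * V)) + t / (2 * r * V) \<and>
         (t \<le> r * V1 / (64 * M) \<longrightarrow>
            heat_kernel n0 S (2 * t) x x \<ge> c1 * V1 ^ 2 / (V ^ 3 * M ^ 2)))"
proof (intro exI[of _ "1 / 16384"] conjI allI impI)
  interpret infinite_tree_graph n0 S using assms(2-4) by unfold_locales
  fix r :: real and x0 x and t :: real
  assume r: "1 \<le> r" and x0: "x0 \<in> S" and m: "\<exists>m. Mprop n0 S x0 r m"
  obtain A where A: "finite A" "A \<subseteq> S" "card A = Mnum n0 S x0 r"
    "\<forall>a\<in>A. r / 4 \<le> real (d x0 a)" "separates x0 r A"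
    using Mnum_separating_set[OF m] by blast
  interpret killed_walk n0 S "gball n0 S x0 r"
    using ball_finite[OF x0] ball_subset by unfold_locales
  note estimates = ball_estimates[OF refl r x0 A(1,2) separating_set_nonempty[OF x0 A(5)] A(4,5)]
  show "let M = real (Mnum n0 S x0 r); B = gball n0 S x0 r; V = vol n0 S x0 r;
          V1 = vol n0 S x0 (r / (32 * M))
      in x \<in> gball n0 S x0 (r / (32 * M)) \<longrightarrow> t > 0 \<longrightarrow>
         exit_prob n0 S B t x \<le> (1 - V1 / (64 * M * V)) + t / (2 * r * V) \<and>
         (t \<le> r * V1 / (64 * M) \<longrightarrow>
            heat_kernel n0 S (2 * t) x x \<ge> 1 / 16384 * V1 ^ 2 / (V ^ 3 * M ^ 2))"
    using estimates A(3) unfolding Let_def by simp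
qed simp

end
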